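(* Let $G$ be a finite group and $\rho:G\to\mathrm{GL}_d(\mathbb{C})$ a mixable irreducible representation. Then $\rho$ is potentially mixable, i.e. there is $a\in G$ such that $-1$ is an eigenvalue of $\rho(a)$. Furthermore, if $(g_1,p_1),\dots,(g_k,p_k)$ is a mixing sequence of $\rho$ of minimal length, then $p_1=p_k=\tfrac12$ and $g_1$ and $g_k$ have even order in $G$; moreover $g_1$ and $g_k$ can be replaced by elements of order a power of $2$ (keeping a mixing sequence of the same length with $p_1=p_k=\tfrac12$).
   Context: An irreducible representation $\rho:G\to\mathrm{GL}_d(\mathbb{C})$ of a finite group $G$ is mixable if there exist $g_1,\dots,g_k\in G$ and $p_1,\dots,p_k\in[0,1]$ with $\prod_{i=1}^k\big((1-p_i)I+p_i\rho(g_i)\big)=0$ (product taken in the order $i=1,\dots,k$); $(g_1,p_1),\dots,(g_k,p_k)$ is then called a mixing sequence of $\rho$, of length $k$. *)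

theory Defs
  imports "HOL-Algebra.Multiplicative_Group" "Jordan_Normal_Form.Char_Poly"
begin

definition is_rep :: "('g, 'b) monoid_scheme \<Rightarrow> nat \<Rightarrow> ('g \<Rightarrow> complex mat) \<Rightarrow> bool" where
  "is_rep G d \<rho> \<longleftrightarrow>
     (\<forall>g\<in>carrier G. \<rho> g \<in> carrier_mat d d \<and> invertible_mat (\<rho> g)) \<and>
     (\<forall>g\<in>carrier G. \<forall>h\<in>carrier G. \<rho> (g \<otimes>\<^bsub>G\<^esub> h) = \<rho> g * \<rho> h)"

definition is_subspace :: "nat \<Rightarrow> complex vec set \<Rightarrow> bool" where
  "is_subspace d W \<longleftrightarrow> W \<subseteq> carrier_vec d \<and> 0\<^sub>v d \<in> W \<and>
     (\<forall>v\<in>W. \<forall>w\<in>W. v + w \<in> W) \<and> (\<forall>c. \<forall>v\<in>W. c \<cdot>\<^sub>v v \<in> W)"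

definition irreducible_rep :: "('g, 'b) monoid_scheme \<Rightarrow> nat \<Rightarrow> ('g \<Rightarrow> complex mat) \<Rightarrow> bool" where
  "irreducible_rep G d \<rho> \<longleftrightarrow> is_rep G d \<rho> \<and> d > 0 \<and>
     (\<forall>W. is_subspace d W \<and> (\<forall>g\<in>carrier G. \<forall>w\<in>W. \<rho> g *\<^sub>v w \<in> W)
          \<longrightarrow> W = {0\<^sub>v d} \<or> W = carrier_vec d)"

definition mix_factor :: "nat \<Rightarrow> ('g \<Rightarrow> complex mat) \<Rightarrow> 'g \<times> real \<Rightarrow> complex mat" where
  "mix_factor d \<rho> gp = (complex_of_real (1 - snd gp)) \<cdot>\<^sub>m 1\<^sub>m d + (complex_of_real (snd gp)) \<cdot>\<^sub>m \<rho> (fst gp)"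

definition mix_product :: "nat \<Rightarrow> ('g \<Rightarrow> complex mat) \<Rightarrow> ('g \<times> real) list \<Rightarrow> complex mat" where
  "mix_product d \<rho> s = foldr (\<lambda>gp M. mix_factor d \<rho> gp * M) s (1\<^sub>m d)"

definition mixing_sequence :: "('g, 'b) monoid_scheme \<Rightarrow> nat \<Rightarrow> ('g \<Rightarrow> complex mat) \<Rightarrow> ('g \<times> real) list \<Rightarrow> bool" where
  "mixing_sequence G d \<rho> s \<longleftrightarrow>
     (\<forall>gp\<in>set s. fst gp \<in> carrier G \<and> 0 \<le> snd gp \<and> snd gp \<le> 1) \<and>
     mix_product d \<rho> s = 0\<^sub>m d d"

definition mixable :: "('g, 'b) monoid_scheme \<Rightarrow> nat \<Rightarrow> ('g \<Rightarrow> complex mat) \<Rightarrow> bool" where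
  "mixable G d \<rho> \<longleftrightarrow> (\<exists>s. mixing_sequence G d \<rho> s)"

definition potentially_mixable :: "('g, 'b) monoid_scheme \<Rightarrow> nat \<Rightarrow> ('g \<Rightarrow> complex mat) \<Rightarrow> bool" where
  "potentially_mixable G d \<rho> \<longleftrightarrow> (\<exists>a\<in>carrier G. eigenvalue (\<rho> a) (-1))"

end

(*
  Let (g_1, p_1), ..., (g_k, p_k) be a mixing sequence of minimal length. By minimality the
  product M of the last k - 1 factors is nonzero, yet the first factor F = (1 - p) I + p rho(g_1)
  satisfies F M = 0, so F is singular and rho(g_1) has the nonpositive real eigenvalue -(1 - p)/p.
  As rho(g_1) has finite order, this eigenvalue is a root of unity, hence -1; so p = 1/2 and the
  order of g_1 is even. For p = 1/2 the equation F M = 0 just says rho(g_1) M = -M, which survives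
  replacing g_1 by g_1^q with q the odd part of its order, an element of 2-power order. The last
  factor is treated symmetrically via M F = 0. Irreducibility enters only through d > 0.
*)

theory Submission
  imports Defs
begin

lemma half_smult_add_eq_0_iff:
  fixes X Y :: "complex mat"
  assumes X: "X \<in> carrier_mat n m" and Y: "Y \<in> carrier_mat n m"
  shows "(1/2) \<cdot>\<^sub>m (X + Y) = 0\<^sub>m n m \<longleftrightarrow> Y = - X"
proof
  assume h: "(1/2) \<cdot>\<^sub>m (X + Y) = 0\<^sub>m n m"
  show "Y = - X"
  proof (rule eq_matI)
    fix i j assume "i < dim_row (- X)" "j < dim_col (- X)"
    then have ij: "i < n" "j < m" using X by auto
    have "((1/2) \<cdot>\<^sub>m (X + Y)) $$ (i, j) = 0" using h ij by simp
    then show "Y $$ (i, j) = (- X) $$ (i, j)" using ij X Y by (simp add: add_eq_0_iff)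
  qed (use X Y in auto)
next
  assume "Y = - X"
  then show "(1/2) \<cdot>\<^sub>m (X + Y) = 0\<^sub>m n m" using X by (intro eq_matI) auto
qed

lemma half_mix_mult_eq_0_iff:
  fixes A M :: "complex mat"
  assumes A: "A \<in> carrier_mat n n" and M: "M \<in> carrier_mat n n"
  shows "((1/2) \<cdot>\<^sub>m 1\<^sub>m n + (1/2) \<cdot>\<^sub>m A) * M = 0\<^sub>m n n \<longleftrightarrow> A * M = - M"
proof -
  have "((1/2) \<cdot>\<^sub>m 1\<^sub>m n + (1/2) \<cdot>\<^sub>m A) * M = (1/2) \<cdot>\<^sub>m (M + A * M)"
    using A M by (simp add: add_mult_distrib_mat[of _ n n] mult_smult_assoc_mat[of _ n n]
        add_smult_distrib_left_mat[of _ n n])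
  then show ?thesis using half_smult_add_eq_0_iff[OF M, of "A * M"] A M by simp
qed

lemma mult_half_mix_eq_0_iff:
  fixes A M :: "complex mat"
  assumes A: "A \<in> carrier_mat n n" and M: "M \<in> carrier_mat n n"
  shows "M * ((1/2) \<cdot>\<^sub>m 1\<^sub>m n + (1/2) \<cdot>\<^sub>m A) = 0\<^sub>m n n \<longleftrightarrow> M * A = - M"
proof -
  have "M * ((1/2) \<cdot>\<^sub>m 1\<^sub>m n + (1/2) \<cdot>\<^sub>m A) = M * ((1/2) \<cdot>\<^sub>m 1\<^sub>m n) + M * ((1/2) \<cdot>\<^sub>m A)"
    by (rule mult_add_distrib_mat[OF M]) (use A in auto)
  also have "\<dots> = (1/2) \<cdot>\<^sub>m (M + M * A)"
    using A M mult_smult_distrib[OF M one_carrier_mat]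
    by (simp add: mult_smult_distrib[of _ n n] add_smult_distrib_left_mat[of _ n n])
  finally show ?thesis using half_smult_add_eq_0_iff[OF M, of "M * A"] A M by simp
qed

lemma pow_mult_eq_uminus_if_mult_eq_uminus:
  fixes A M :: "'a :: ring_1 mat"
  assumes A: "A \<in> carrier_mat n n" and M: "M \<in> carrier_mat n n" and AM: "A * M = - M"
  shows "A ^\<^sub>m k * M = (if even k then M else - M)"
proof (induction k)
  case (Suc k)
  have "A ^\<^sub>m Suc k * M = A ^\<^sub>m k * (A * M)"
    using A M by (simp add: assoc_mult_mat[of _ n n _ n _ n])
  also have "\<dots> = - (A ^\<^sub>m k * M)" unfolding AM using A M by simp
  finally show ?case unfolding Suc by simp
qed (use A M in simp)

lemma mult_pow_eq_uminus_if_mult_eq_uminus: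
  fixes A M :: "'a :: ring_1 mat"
  assumes A: "A \<in> carrier_mat n n" and M: "M \<in> carrier_mat n n" and MA: "M * A = - M"
  shows "M * A ^\<^sub>m k = (if even k then M else - M)"
proof (induction k)
  case (Suc k)
  have "M * A ^\<^sub>m Suc k = (M * A ^\<^sub>m k) * A"
    using A M by (simp add: assoc_mult_mat[of _ n n _ n _ n])
  then show ?case unfolding Suc using A M MA by simp
qed (use A M in \<open>simp add: right_mult_one_mat\<close>)

lemma det_zero_if_zero_divisor:
  fixes A B :: "'a :: field mat"
  assumes A: "A \<in> carrier_mat n n" and B: "B \<in> carrier_mat n n" and "B \<noteq> 0\<^sub>m n n"
    and "A * B = 0\<^sub>m n n \<or> B * A = 0\<^sub>m n n"
  shows "det A = 0"
proof (rule ccontr)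
  assume "det A \<noteq> 0"
  then obtain C where C: "C \<in> carrier_mat n n" "A * C = 1\<^sub>m n" "C * A = 1\<^sub>m n"
    using det_non_zero_imp_unit[OF A] unfolding Units_def ring_mat_def by auto
  have "B = 0\<^sub>m n n"
    using assms(4)
  proof
    assume "A * B = 0\<^sub>m n n"
    then have "C * (A * B) = 0\<^sub>m n n" using C by simp
    then show ?thesis using A B C by (simp add: assoc_mult_mat[of _ n n _ n _ n, symmetric])
  next
    assume "B * A = 0\<^sub>m n n"
    then have "(B * A) * C = 0\<^sub>m n n" using C by simp
    then show ?thesis using A B C by (simp add: assoc_mult_mat[of _ n n _ n _ n])
  qed
  then show False using assms(3) by contradiction
qed

lemma smult_mat_mult_vec:
  assumes "A \<in> carrier_mat n n" "v \<in> carrier_vec n"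
  shows "(c \<cdot>\<^sub>m A) *\<^sub>v v = (c :: 'a :: comm_ring_1) \<cdot>\<^sub>v (A *\<^sub>v v)"
  using assms by (intro eq_vecI) auto

lemma eigenvalue_pow_eq_1:
  fixes A :: "'a :: idom mat"
  assumes A: "A \<in> carrier_mat n n" and "A ^\<^sub>m k = 1\<^sub>m n" and ev: "eigenvector A v c"
  shows "c ^ k = 1"
proof -
  have v: "v \<in> carrier_vec n" "v \<noteq> 0\<^sub>v n" using ev A unfolding eigenvector_def by auto
  then obtain i where i: "i < n" "v $ i \<noteq> 0" by (metis eq_vecI carrier_vecD index_zero_vec)
  have "v = c ^ k \<cdot>\<^sub>v v" using eigenvector_pow[OF A ev, of k] assms(2) v by simp
  then have "v $ i = c ^ k * v $ i" using i v by (metis carrier_vecD index_smult_vec(1))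
  then show ?thesis using i by simp
qed

lemma real_nonpos_root_of_unity:
  fixes c :: real
  assumes "c \<le> 0" "c ^ k = 1" "k > 0"
  shows "c = -1 \<and> even k"
proof -
  have "\<bar>c\<bar> ^ k = 1" using arg_cong[OF assms(2), of abs] by (simp add: power_abs)
  then have "\<bar>c\<bar> = 1" using power_eq_imp_eq_base[of "\<bar>c\<bar>" k 1] assms(3) by simp
  with \<open>c \<le> 0\<close> have "c = -1" by simp
  moreover from this \<open>c ^ k = 1\<close> have "even k" by (cases "even k") auto
  ultimately show ?thesis by simp
qed

lemma mix_matrix_mult_vec:
  assumes "A \<in> carrier_mat n n" "v \<in> carrier_vec n"
  shows "(complex_of_real (1 - p) \<cdot>\<^sub>m 1\<^sub>m n + complex_of_real p \<cdot>\<^sub>m A) *\<^sub>v v =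
    complex_of_real (1 - p) \<cdot>\<^sub>v v + complex_of_real p \<cdot>\<^sub>v (A *\<^sub>v v)"
  using assms by (simp add: add_mult_distrib_mat_vec[of _ n n] smult_mat_mult_vec[of _ n])

lemma mix_matrix_kernel_eigenvector:
  fixes A :: "complex mat"
  assumes A: "A \<in> carrier_mat n n" and v: "v \<in> carrier_vec n" and "p \<noteq> 0"
    and ker: "(complex_of_real (1 - p) \<cdot>\<^sub>m 1\<^sub>m n + complex_of_real p \<cdot>\<^sub>m A) *\<^sub>v v = 0\<^sub>v n"
  shows "A *\<^sub>v v = complex_of_real (- (1 - p) / p) \<cdot>\<^sub>v v"
proof (rule eq_vecI)
  fix i assume "i < dim_vec (complex_of_real (- (1 - p) / p) \<cdot>\<^sub>v v)"
  then have "i < n" using v by simp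
  have "complex_of_real (1 - p) \<cdot>\<^sub>v v + complex_of_real p \<cdot>\<^sub>v (A *\<^sub>v v) = 0\<^sub>v n"
    using ker unfolding mix_matrix_mult_vec[OF A v] .
  then have "(complex_of_real (1 - p) \<cdot>\<^sub>v v + complex_of_real p \<cdot>\<^sub>v (A *\<^sub>v v)) $ i = 0"
    using \<open>i < n\<close> by simp
  then have "complex_of_real (1 - p) * v $ i + complex_of_real p * (A *\<^sub>v v) $ i = 0"
    using \<open>i < n\<close> A v by simp
  then have "complex_of_real p * (A *\<^sub>v v) $ i = - (complex_of_real (1 - p) * v $ i)"
    by (simp add: eq_neg_iff_add_eq_0 add.commute)
  then show "(A *\<^sub>v v) $ i = (complex_of_real (- (1 - p) / p) \<cdot>\<^sub>v v) $ i"
    using \<open>i < n\<close> \<open>p \<noteq> 0\<close> v by (simp add: field_simps)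
qed (use A v in simp)

lemma singular_mix_matrix_of_finite_order:
  fixes A :: "complex mat"
  assumes A: "A \<in> carrier_mat n n" and pow: "A ^\<^sub>m k = 1\<^sub>m n" and "k > 0" and p: "0 \<le> p" "p \<le> 1"
    and det: "det (complex_of_real (1 - p) \<cdot>\<^sub>m 1\<^sub>m n + complex_of_real p \<cdot>\<^sub>m A) = 0"
  shows "p = 1/2 \<and> eigenvalue A (-1) \<and> even k"
proof -
  let ?F = "complex_of_real (1 - p) \<cdot>\<^sub>m 1\<^sub>m n + complex_of_real p \<cdot>\<^sub>m A"
  have "?F \<in> carrier_mat n n" using A by simp
  then obtain v where v: "v \<in> carrier_vec n" "v \<noteq> 0\<^sub>v n" and ker: "?F *\<^sub>v v = 0\<^sub>v n"
    using det det_0_iff_vec_prod_zero by blast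
  have "p \<noteq> 0"
  proof
    assume "p = 0"
    have "?F *\<^sub>v v = v"
      unfolding mix_matrix_mult_vec[OF A v(1)] \<open>p = 0\<close> using A v(1) by (intro eq_vecI) auto
    with ker v(2) show False by simp
  qed
  define c where "c = - (1 - p) / p"
  have ev: "eigenvector A v (complex_of_real c)"
    using mix_matrix_kernel_eigenvector[OF A v(1) \<open>p \<noteq> 0\<close> ker] A v unfolding eigenvector_def c_def by simp
  have "c ^ k = 1"
    using eigenvalue_pow_eq_1[OF A pow ev] by (metis of_real_eq_1_iff of_real_power)
  moreover have "c \<le> 0" using p unfolding c_def by (simp add: divide_nonpos_nonneg)
  ultimately have "c = -1" "even k" using real_nonpos_root_of_unity[OF _ _ \<open>k > 0\<close>] by auto
  moreover from \<open>c = -1\<close> \<open>p \<noteq> 0\<close> have "p = 1/2" unfolding c_def by (simp add: field_simps)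
  ultimately show ?thesis using ev unfolding eigenvalue_def by auto
qed

lemma (in group) odd_pow_two_power_ord:
  assumes "finite (carrier G)" "x \<in> carrier G"
  obtains q m :: nat where "odd q" "ord (x [^] q) = 2 ^ m"
proof -
  have "ord x \<noteq> 0" using ord_ge_1[OF assms] by simp
  then obtain q where q: "ord x = 2 ^ multiplicity 2 (ord x) * q" "odd q"
    using multiplicity_decompose'[of "ord x" "2::nat"] by auto
  then have "q dvd ord x" "q \<noteq> 0" by (metis dvd_triv_right, metis odd_pos neq0_conv)
  then have "ord (x [^] q) = ord x div q" by (rule ord_pow[OF assms(2)])
  also have "\<dots> = 2 ^ multiplicity 2 (ord x)" using q \<open>q \<noteq> 0\<close> by (metis nonzero_mult_div_cancel_right)
  finally show ?thesis using q(2) that by blast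
qed

lemma rep_carrier_mat: "is_rep G d \<rho> \<Longrightarrow> g \<in> carrier G \<Longrightarrow> \<rho> g \<in> carrier_mat d d"
  unfolding is_rep_def by auto

lemma rep_mult:
  "is_rep G d \<rho> \<Longrightarrow> g \<in> carrier G \<Longrightarrow> h \<in> carrier G \<Longrightarrow> \<rho> (g \<otimes>\<^bsub>G\<^esub> h) = \<rho> g * \<rho> h"
  unfolding is_rep_def by blast

lemma rep_invertible: "is_rep G d \<rho> \<Longrightarrow> g \<in> carrier G \<Longrightarrow> invertible_mat (\<rho> g)"
  unfolding is_rep_def by simp

lemma rep_one:
  assumes "group G" and rep: "is_rep G d \<rho>"
  shows "\<rho> \<one>\<^bsub>G\<^esub> = 1\<^sub>m d"
proof -
  interpret group G by fact
  let ?E = "\<rho> \<one>\<^bsub>G\<^esub>"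
  have E: "?E \<in> carrier_mat d d" using rep_carrier_mat[OF rep] by simp
  have idem: "?E * ?E = ?E" using rep_mult[OF rep one_closed one_closed] by simp
  obtain B where EB: "?E * B = 1\<^sub>m d" and BE': "B * ?E = 1\<^sub>m (dim_row B)"
    using rep_invertible[OF rep one_closed] E unfolding invertible_mat_def inverts_mat_def by auto
  have B: "B \<in> carrier_mat d d"
    using arg_cong[OF EB, of dim_col] arg_cong[OF BE', of dim_col] E by auto
  with BE' have BE: "B * ?E = 1\<^sub>m d" by simp
  have "?E = (B * ?E) * ?E" using BE E by simp
  also have "\<dots> = B * ?E" using B E idem by (simp add: assoc_mult_mat[of _ d d _ d _ d])
  finally show ?thesis using BE by simp
qed

lemma rep_pow:
  assumes "group G" and rep: "is_rep G d \<rho>" and g: "g \<in> carrier G"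
  shows "\<rho> (g [^]\<^bsub>G\<^esub> (n::nat)) = \<rho> g ^\<^sub>m n"
proof (induction n)
  case 0
  show ?case using rep_one[OF assms(1,2)] rep_carrier_mat[OF rep g] by simp
next
  case (Suc n)
  interpret group G by fact
  have "\<rho> (g [^]\<^bsub>G\<^esub> Suc n) = \<rho> (g [^]\<^bsub>G\<^esub> n) * \<rho> g" using rep_mult[OF rep _ g] g by simp
  then show ?case using Suc by simp
qed

lemma rep_pow_ord:
  assumes "group G" "is_rep G d \<rho>" "g \<in> carrier G"
  shows "\<rho> g ^\<^sub>m group.ord G g = 1\<^sub>m d"
  using rep_pow[OF assms] rep_one[OF assms(1,2)] group.pow_ord_eq_1[OF assms(1,3)] by metis

lemma mix_factor_carrier_mat:
  "is_rep G d \<rho> \<Longrightarrow> fst gp \<in> carrier G \<Longrightarrow> mix_factor d \<rho> gp \<in> carrier_mat d d"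
  unfolding mix_factor_def is_rep_def by auto

lemma mix_factor_half: "mix_factor d \<rho> (g, 1/2) = (1/2) \<cdot>\<^sub>m 1\<^sub>m d + (1/2) \<cdot>\<^sub>m \<rho> g"
  unfolding mix_factor_def by simp

lemma mix_product_Nil [simp]: "mix_product d \<rho> [] = 1\<^sub>m d"
  by (simp add: mix_product_def)

lemma mix_product_Cons [simp]: "mix_product d \<rho> (gp # s) = mix_factor d \<rho> gp * mix_product d \<rho> s"
  by (simp add: mix_product_def)

lemma mix_product_carrier_mat:
  "is_rep G d \<rho> \<Longrightarrow> \<forall>gp\<in>set s. fst gp \<in> carrier G \<Longrightarrow> mix_product d \<rho> s \<in> carrier_mat d d"
  by (induction s) (auto intro!: mult_carrier_mat mix_factor_carrier_mat)

lemma mix_product_snoc: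
  assumes rep: "is_rep G d \<rho>" and "\<forall>gp\<in>set s. fst gp \<in> carrier G" and "fst gp \<in> carrier G"
  shows "mix_product d \<rho> (s @ [gp]) = mix_product d \<rho> s * mix_factor d \<rho> gp"
  using assms(2)
proof (induction s)
  case Nil
  then show ?case using mix_factor_carrier_mat[OF rep assms(3)] by simp
next
  case (Cons x s)
  then have "mix_factor d \<rho> x \<in> carrier_mat d d" "mix_product d \<rho> s \<in> carrier_mat d d"
    using mix_factor_carrier_mat[OF rep] mix_product_carrier_mat[OF rep] by auto
  with Cons mix_factor_carrier_mat[OF rep assms(3)] show ?case
    by (simp add: assoc_mult_mat[of _ d d _ d _ d])
qed

lemma mixing_sequence_nonempty:
  assumes "d > 0" and "mixing_sequence G d \<rho> s"
  shows "s \<noteq> []"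
proof
  assume "s = []"
  with assms(2) have "(1\<^sub>m d :: complex mat) $$ (0, 0) = 0\<^sub>m d d $$ (0, 0)"
    unfolding mixing_sequence_def by simp
  with assms(1) show False by simp
qed

lemma mix_factor_zero_divisor:
  assumes grp: "group G" and fin: "finite (carrier G)" and rep: "is_rep G d \<rho>"
    and g: "g \<in> carrier G" and p: "0 \<le> p" "p \<le> 1"
    and M: "M \<in> carrier_mat d d" "M \<noteq> 0\<^sub>m d d"
    and zero: "mix_factor d \<rho> (g, p) * M = 0\<^sub>m d d \<or> M * mix_factor d \<rho> (g, p) = 0\<^sub>m d d"
  shows "p = 1/2 \<and> eigenvalue (\<rho> g) (-1) \<and> even (group.ord G g)"
proof -
  have "det (mix_factor d \<rho> (g, p)) = 0"
    using det_zero_if_zero_divisor[OF mix_factor_carrier_mat[OF rep] M] g zero by simp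
  then have "det (complex_of_real (1 - p) \<cdot>\<^sub>m 1\<^sub>m d + complex_of_real p \<cdot>\<^sub>m \<rho> g) = 0"
    unfolding mix_factor_def by simp
  moreover have "group.ord G g > 0" using group.ord_ge_1[OF grp fin g] by simp
  ultimately show ?thesis
    using singular_mix_matrix_of_finite_order[OF rep_carrier_mat[OF rep g] rep_pow_ord[OF grp rep g] _ p]
    by blast
qed

lemma half_mix_factor_mult_pow_odd:
  assumes grp: "group G" and rep: "is_rep G d \<rho>" and g: "g \<in> carrier G"
    and M: "M \<in> carrier_mat d d" and "odd (q :: nat)" and zero: "mix_factor d \<rho> (g, 1/2) * M = 0\<^sub>m d d"
  shows "mix_factor d \<rho> (g [^]\<^bsub>G\<^esub> q, 1/2) * M = 0\<^sub>m d d"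
proof -
  have A: "\<rho> g \<in> carrier_mat d d" by (rule rep_carrier_mat[OF rep g])
  have "\<rho> g * M = - M" using zero half_mix_mult_eq_0_iff[OF A M] by (simp add: mix_factor_half)
  then have "\<rho> (g [^]\<^bsub>G\<^esub> q) * M = - M"
    using pow_mult_eq_uminus_if_mult_eq_uminus[OF A M] rep_pow[OF grp rep g] \<open>odd q\<close> by simp
  moreover have "\<rho> (g [^]\<^bsub>G\<^esub> q) \<in> carrier_mat d d"
    using rep_carrier_mat[OF rep] group.is_monoid[OF grp] g by (simp add: monoid.nat_pow_closed)
  ultimately show ?thesis using half_mix_mult_eq_0_iff[of _ d M] M by (simp add: mix_factor_half)
qed

lemma mult_half_mix_factor_pow_odd:
  assumes grp: "group G" and rep: "is_rep G d \<rho>" and g: "g \<in> carrier G"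
    and M: "M \<in> carrier_mat d d" and "odd (q :: nat)" and zero: "M * mix_factor d \<rho> (g, 1/2) = 0\<^sub>m d d"
  shows "M * mix_factor d \<rho> (g [^]\<^bsub>G\<^esub> q, 1/2) = 0\<^sub>m d d"
proof -
  have A: "\<rho> g \<in> carrier_mat d d" by (rule rep_carrier_mat[OF rep g])
  have "M * \<rho> g = - M" using zero mult_half_mix_eq_0_iff[OF A M] by (simp add: mix_factor_half)
  then have "M * \<rho> (g [^]\<^bsub>G\<^esub> q) = - M"
    using mult_pow_eq_uminus_if_mult_eq_uminus[OF A M] rep_pow[OF grp rep g] \<open>odd q\<close> by simp
  moreover have "\<rho> (g [^]\<^bsub>G\<^esub> q) \<in> carrier_mat d d"
    using rep_carrier_mat[OF rep] group.is_monoid[OF grp] g by (simp add: monoid.nat_pow_closed)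
  ultimately show ?thesis using mult_half_mix_eq_0_iff[of _ d M] M by (simp add: mix_factor_half)
qed

definition minimal_mixing_sequence ::
    "('g, 'b) monoid_scheme \<Rightarrow> nat \<Rightarrow> ('g \<Rightarrow> complex mat) \<Rightarrow> ('g \<times> real) list \<Rightarrow> bool" where
  "minimal_mixing_sequence G d \<rho> s \<longleftrightarrow>
     mixing_sequence G d \<rho> s \<and> (\<forall>s'. mixing_sequence G d \<rho> s' \<longrightarrow> length s \<le> length s')"

lemma mixable_imp_minimal_mixing_sequence:
  "mixable G d \<rho> \<Longrightarrow> \<exists>s. minimal_mixing_sequence G d \<rho> s"
  unfolding mixable_def minimal_mixing_sequence_def
  by (metis ex_has_least_nat[of "mixing_sequence G d \<rho>" _ length])

lemma minimal_mixing_sequence_same_length: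
  "minimal_mixing_sequence G d \<rho> s \<Longrightarrow> mixing_sequence G d \<rho> s' \<Longrightarrow> length s' = length s
    \<Longrightarrow> minimal_mixing_sequence G d \<rho> s'"
  unfolding minimal_mixing_sequence_def by simp

lemma minimal_mixing_sequence_shorter_product_nonzero:
  assumes "minimal_mixing_sequence G d \<rho> s" and "length t < length s"
    and "\<forall>gp\<in>set t. fst gp \<in> carrier G \<and> 0 \<le> snd gp \<and> snd gp \<le> 1"
  shows "mix_product d \<rho> t \<noteq> 0\<^sub>m d d"
proof
  assume "mix_product d \<rho> t = 0\<^sub>m d d"
  with assms(3) have "mixing_sequence G d \<rho> t" unfolding mixing_sequence_def by simp
  with assms(1,2) show False unfolding minimal_mixing_sequence_def by fastforce
qed

lemma minimal_mixing_sequence_hd: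
  assumes grp: "group G" and fin: "finite (carrier G)" and rep: "is_rep G d \<rho>" and "d > 0"
    and min: "minimal_mixing_sequence G d \<rho> s"
  shows "s \<noteq> [] \<and> fst (hd s) \<in> carrier G \<and> snd (hd s) = 1/2 \<and>
    eigenvalue (\<rho> (fst (hd s))) (-1) \<and> even (group.ord G (fst (hd s))) \<and>
    (\<exists>a\<in>carrier G. (\<exists>m. group.ord G a = 2 ^ m) \<and> minimal_mixing_sequence G d \<rho> (s[0 := (a, 1/2)]))"
proof -
  have mix: "mixing_sequence G d \<rho> s" using min unfolding minimal_mixing_sequence_def by simp
  then obtain g p t where s: "s = (g, p) # t"
    using mixing_sequence_nonempty[OF \<open>d > 0\<close>] by (metis neq_Nil_conv surj_pair)
  let ?M = "mix_product d \<rho> t"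
  have g: "g \<in> carrier G" "0 \<le> p" "p \<le> 1"
    and t: "\<forall>gp\<in>set t. fst gp \<in> carrier G \<and> 0 \<le> snd gp \<and> snd gp \<le> 1"
    and zero: "mix_factor d \<rho> (g, p) * ?M = 0\<^sub>m d d"
    using mix unfolding mixing_sequence_def s by auto
  have M: "?M \<in> carrier_mat d d" "?M \<noteq> 0\<^sub>m d d"
    using mix_product_carrier_mat[OF rep] minimal_mixing_sequence_shorter_product_nonzero[OF min _ t] t s
    by auto
  have ends: "p = 1/2 \<and> eigenvalue (\<rho> g) (-1) \<and> even (group.ord G g)"
    using mix_factor_zero_divisor[OF grp fin rep g M] zero by blast
  obtain q m :: nat where q: "odd q" "group.ord G (g [^]\<^bsub>G\<^esub> q) = 2 ^ m"
    using group.odd_pow_two_power_ord[OF grp fin g(1)] by blast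
  have gq: "g [^]\<^bsub>G\<^esub> q \<in> carrier G" using grp g(1) by (simp add: group.is_monoid monoid.nat_pow_closed)
  have "mix_factor d \<rho> (g [^]\<^bsub>G\<^esub> q, 1/2) * ?M = 0\<^sub>m d d"
    using half_mix_factor_mult_pow_odd[OF grp rep g(1) M(1) q(1)] zero ends by simp
  then have "mixing_sequence G d \<rho> ((g [^]\<^bsub>G\<^esub> q, 1/2) # t)"
    using gq t unfolding mixing_sequence_def by simp
  then have "minimal_mixing_sequence G d \<rho> (s[0 := (g [^]\<^bsub>G\<^esub> q, 1/2)])"
    using minimal_mixing_sequence_same_length[OF min] s by simp
  then show ?thesis using ends g(1) gq q(2) s by auto
qed

lemma minimal_mixing_sequence_last:
  assumes grp: "group G" and fin: "finite (carrier G)" and rep: "is_rep G d \<rho>" and "d > 0"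
    and min: "minimal_mixing_sequence G d \<rho> s"
  shows "snd (last s) = 1/2 \<and> even (group.ord G (fst (last s))) \<and>
    (\<exists>b\<in>carrier G. (\<exists>m. group.ord G b = 2 ^ m) \<and>
       minimal_mixing_sequence G d \<rho> (s[length s - 1 := (b, 1/2)]))"
proof -
  have mix: "mixing_sequence G d \<rho> s" using min unfolding minimal_mixing_sequence_def by simp
  then obtain g p t where s: "s = t @ [(g, p)]"
    using mixing_sequence_nonempty[OF \<open>d > 0\<close>] by (metis rev_exhaust surj_pair)
  let ?M = "mix_product d \<rho> t"
  have g: "g \<in> carrier G" "0 \<le> p" "p \<le> 1"
    and t: "\<forall>gp\<in>set t. fst gp \<in> carrier G \<and> 0 \<le> snd gp \<and> snd gp \<le> 1"
    using mix unfolding mixing_sequence_def s by auto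
  have snoc: "mix_product d \<rho> (t @ [gp]) = ?M * mix_factor d \<rho> gp" if "fst gp \<in> carrier G" for gp
    using mix_product_snoc[OF rep _ that] t by blast
  have zero: "?M * mix_factor d \<rho> (g, p) = 0\<^sub>m d d"
    using mix snoc[of "(g, p)"] g unfolding mixing_sequence_def s by simp
  have M: "?M \<in> carrier_mat d d" "?M \<noteq> 0\<^sub>m d d"
    using mix_product_carrier_mat[OF rep] minimal_mixing_sequence_shorter_product_nonzero[OF min _ t] t s
    by auto
  have ends: "p = 1/2 \<and> even (group.ord G g)"
    using mix_factor_zero_divisor[OF grp fin rep g M] zero by blast
  obtain q m :: nat where q: "odd q" "group.ord G (g [^]\<^bsub>G\<^esub> q) = 2 ^ m"
    using group.odd_pow_two_power_ord[OF grp fin g(1)] by blast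
  have gq: "g [^]\<^bsub>G\<^esub> q \<in> carrier G" using grp g(1) by (simp add: group.is_monoid monoid.nat_pow_closed)
  have "?M * mix_factor d \<rho> (g [^]\<^bsub>G\<^esub> q, 1/2) = 0\<^sub>m d d"
    using mult_half_mix_factor_pow_odd[OF grp rep g(1) M(1) q(1)] zero ends by simp
  then have "mixing_sequence G d \<rho> (t @ [(g [^]\<^bsub>G\<^esub> q, 1/2)])"
    using gq t snoc[of "(g [^]\<^bsub>G\<^esub> q, 1/2)"] unfolding mixing_sequence_def by simp
  then have "minimal_mixing_sequence G d \<rho> (s[length s - 1 := (g [^]\<^bsub>G\<^esub> q, 1/2)])"
    using minimal_mixing_sequence_same_length[OF min] s by simp
  then show ?thesis using ends gq q(2) s by auto
qed

lemma mixable_imp_potentially_mixable: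
  assumes "group G" "finite (carrier G)" "is_rep G d \<rho>" "d > 0" "mixable G d \<rho>"
  shows "potentially_mixable G d \<rho>"
  using mixable_imp_minimal_mixing_sequence[OF assms(5)] minimal_mixing_sequence_hd[OF assms(1-4)]
  unfolding potentially_mixable_def by blast

lemma minimal_mixing_sequence_ends:
  assumes grp: "group G" and fin: "finite (carrier G)" and rep: "is_rep G d \<rho>" and "d > 0"
    and min: "minimal_mixing_sequence G d \<rho> s" and k: "k = length s"
  shows "snd (s ! 0) = 1/2 \<and> snd (s ! (k - 1)) = 1/2 \<and>
    even (group.ord G (fst (s ! 0))) \<and> even (group.ord G (fst (s ! (k - 1)))) \<and>
    (\<exists>a\<in>carrier G. \<exists>b\<in>carrier G. (\<exists>m. group.ord G a = 2 ^ m) \<and> (\<exists>n. group.ord G b = 2 ^ n) \<and>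
      (\<exists>s'. length s' = k \<and> s' ! 0 = (a, 1/2) \<and> s' ! (k - 1) = (b, 1/2) \<and>
         (\<forall>i. 0 < i \<and> i < k - 1 \<longrightarrow> s' ! i = s ! i) \<and> mixing_sequence G d \<rho> s'))"
proof -
  note hd = minimal_mixing_sequence_hd[OF grp fin rep \<open>d > 0\<close> min]
  note last = minimal_mixing_sequence_last[OF grp fin rep \<open>d > 0\<close> min]
  have "k > 0" "s ! 0 = hd s" "s ! (k - 1) = last s"
    using hd k by (simp_all add: hd_conv_nth last_conv_nth)
  obtain a where a: "a \<in> carrier G" "\<exists>m. group.ord G a = 2 ^ m"
    and min_a: "minimal_mixing_sequence G d \<rho> (s[0 := (a, 1/2)])"
    using hd by blast
  obtain b where b: "b \<in> carrier G" "\<exists>m. group.ord G b = 2 ^ m"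
    and min_ab: "minimal_mixing_sequence G d \<rho> (s[0 := (a, 1/2), k - 1 := (b, 1/2)])"
    using minimal_mixing_sequence_last[OF grp fin rep \<open>d > 0\<close> min_a] k by auto
  define s' where "s' = s[0 := (a, 1/2), k - 1 := (b, 1/2)]"
  \<comment> \<open>for k = 1 both updates hit the same entry, and only b survives\<close>
  define a' where "a' = (if k = 1 then b else a)"
  have "a' \<in> carrier G" "\<exists>m. group.ord G a' = 2 ^ m" using a b unfolding a'_def by auto
  moreover have "length s' = k" "s' ! (k - 1) = (b, 1/2)"
    using k \<open>k > 0\<close> unfolding s'_def by auto
  moreover have "s' ! 0 = (a', 1/2)"
  proof (cases "k = 1")
    case False
    then have "k - 1 \<noteq> 0" using \<open>k > 0\<close> by simp
    then have "s' ! 0 = s[0 := (a, 1/2)] ! 0" unfolding s'_def by (rule nth_list_update_neq)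
    then show ?thesis using k \<open>k > 0\<close> False unfolding a'_def by simp
  qed (use k in \<open>simp add: s'_def a'_def\<close>)
  moreover have "\<forall>i. 0 < i \<and> i < k - 1 \<longrightarrow> s' ! i = s ! i"
    unfolding s'_def by simp
  moreover have "mixing_sequence G d \<rho> s'"
    using min_ab unfolding s'_def minimal_mixing_sequence_def by simp
  ultimately show ?thesis
    unfolding \<open>s ! 0 = hd s\<close> \<open>s ! (k - 1) = last s\<close> using b hd last by blast
qed

theorem mainTheorem13:
  fixes G :: "('g, 'b) monoid_scheme" and d :: nat and \<rho> :: "'g \<Rightarrow> complex mat"
  assumes "group G" and "finite (carrier G)"
    and "irreducible_rep G d \<rho>" and "mixable G d \<rho>"
  shows "potentially_mixable G d \<rho> \<and>
    (\<forall>s. mixing_sequence G d \<rho> s \<and>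
         (\<forall>s'. mixing_sequence G d \<rho> s' \<longrightarrow> length s \<le> length s') \<longrightarrow>
       (let k = length s in
          snd (s ! 0) = 1/2 \<and> snd (s ! (k - 1)) = 1/2 \<and>
          even (group.ord G (fst (s ! 0))) \<and> even (group.ord G (fst (s ! (k - 1)))) \<and>
          (\<exists>a\<in>carrier G. \<exists>b\<in>carrier G. (\<exists>m. group.ord G a = 2 ^ m) \<and> (\<exists>n. group.ord G b = 2 ^ n) \<and>
             (\<exists>s'. length s' = k \<and> s' ! 0 = (a, 1/2) \<and> s' ! (k - 1) = (b, 1/2) \<and>
                   (\<forall>i. 0 < i \<and> i < k - 1 \<longrightarrow> s' ! i = s ! i) \<and>
                   mixing_sequence G d \<rho> s'))))"
proof -
  have rep: "is_rep G d \<rho>" and "d > 0" using assms(3) unfolding irreducible_rep_def by auto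
  show ?thesis
    using mixable_imp_potentially_mixable[OF assms(1,2) rep \<open>d > 0\<close> assms(4)]
      minimal_mixing_sequence_ends[OF assms(1,2) rep \<open>d > 0\<close> _ refl]
    unfolding minimal_mixing_sequence_def Let_def by blast
qed

end
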